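(* Let $\pi$ be a probability measure on $\mathcal{B}_n=\{0,1\}^n$ and $L$ the generator of a $\pi$-reversible flip-swap random walk on $\mathcal{B}_n$ which is $R$-stable for some $R\ge0$. Then for any nonempty $A\subset\mathcal{B}_n$ and every $x\in\mathrm{supp}\,\pi$, \[ \Gamma_+\big(d_T^2(\cdot,A)\big)(x)\le8R\rho(L)\,d_T^2(x,A). \] Moreover, for all $x,y\in\mathcal{B}_n$ and any nonempty $A\subset\mathcal{B}_n$, $d_T^2(x,A)-d_T^2(y,A)\le d_H(x,y)$.
   Context: A generator on $\mathcal{B}_n$ is a real matrix $L=(L(x,y))$ with $L(x,y)\ge0$ for $x\ne y$ and zero row sums; $\pi$-reversible: $\pi(x)L(x,y)=\pi(y)L(y,x)$. With $(Lg)(x)=\sum_yL(x,y)g(y)$, $\mathcal{E}(f,g)=-\sum_x\pi(x)f(x)(Lg)(x)$, $\mathrm{Ent}_\pi(f)=\pi(f\log f)-\pi(f)\log\pi(f)$, $\rho(L)$ is the largest constant with $\rho(L)\mathrm{Ent}_\pi(f)\le\mathcal{E}(f,\log f)$ for all non-constant $f\ge0$. Flip-swap: $L(x,y)>0$, $x\ne y$, implies $y$ differs from $x$ by flipping one coordinate or swapping two unequal coordinates. $R$-stable: $\rho(L)>0$ and $\max_{x\in\mathrm{supp}\,\pi,\,i\in[n]}\sum_{y:y_i\ne x_i}L(x,y)\le R\rho(L)$. $\Gamma_+(g)(x)=\sum_y(g(x)-g(y))_+^2L(x,y)$. $d_H(x,y)=\sum_i\mathbf{1}\{x_i\ne y_i\}$;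 $d_\alpha(x,y)=\sum_i\alpha_i\mathbf{1}\{x_i\ne y_i\}$, $d_\alpha(x,A)=\min_{y\in A}d_\alpha(x,y)$, $d_T(x,A)=\sup\{d_\alpha(x,A):\alpha\in[0,\infty)^n,|\alpha|\le1\}$. *)

theory Defs
  imports "HOL-Analysis.Analysis"
begin

text \<open>The hypercube B_n is modelled as the type 'n \<Rightarrow> bool for a finite index type 'n
  (so n = CARD('n)).  Measures and generators are real-valued functions/matrices.\<close>

type_synonym 'n cube = "'n \<Rightarrow> bool"

definition prob_on :: "('n::finite cube \<Rightarrow> real) \<Rightarrow> bool" where
  "prob_on \<mu> \<longleftrightarrow> (\<forall>x. \<mu> x \<ge> 0) \<and> (\<Sum>x\<in>UNIV. \<mu> x) = 1"

definition generator :: "('n::finite cube \<Rightarrow> 'n cube \<Rightarrow> real) \<Rightarrow> bool" where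
  "generator L \<longleftrightarrow> (\<forall>x y. x \<noteq> y \<longrightarrow> L x y \<ge> 0) \<and> (\<forall>x. (\<Sum>y\<in>UNIV. L x y) = 0)"

definition reversible :: "('n::finite cube \<Rightarrow> real) \<Rightarrow> ('n cube \<Rightarrow> 'n cube \<Rightarrow> real) \<Rightarrow> bool" where
  "reversible \<mu> L \<longleftrightarrow> (\<forall>x y. \<mu> x * L x y = \<mu> y * L y x)"

definition flip_swap :: "('n::finite cube \<Rightarrow> 'n cube \<Rightarrow> real) \<Rightarrow> bool" where
  "flip_swap L \<longleftrightarrow> (\<forall>x y. L x y > 0 \<and> x \<noteq> y \<longrightarrow>
      (\<exists>i. y = x(i := \<not> x i)) \<or>
      (\<exists>i j. x i \<noteq> x j \<and> y = x(i := x j, j := x i)))"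

definition gen_apply :: "('n::finite cube \<Rightarrow> 'n cube \<Rightarrow> real) \<Rightarrow> ('n cube \<Rightarrow> real) \<Rightarrow> 'n cube \<Rightarrow> real" where
  "gen_apply L g x = (\<Sum>y\<in>UNIV. L x y * g y)"

definition dirichlet :: "('n::finite cube \<Rightarrow> real) \<Rightarrow> ('n cube \<Rightarrow> 'n cube \<Rightarrow> real)
    \<Rightarrow> ('n cube \<Rightarrow> real) \<Rightarrow> ('n cube \<Rightarrow> real) \<Rightarrow> real" where
  "dirichlet \<mu> L f g = - (\<Sum>x\<in>UNIV. \<mu> x * f x * gen_apply L g x)"

definition expect :: "('n::finite cube \<Rightarrow> real) \<Rightarrow> ('n cube \<Rightarrow> real) \<Rightarrow> real" where
  "expect \<mu> f = (\<Sum>x\<in>UNIV. \<mu> x * f x)"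

definition Ent :: "('n::finite cube \<Rightarrow> real) \<Rightarrow> ('n cube \<Rightarrow> real) \<Rightarrow> real" where
  "Ent \<mu> f = expect \<mu> (\<lambda>x. f x * ln (f x)) - expect \<mu> f * ln (expect \<mu> f)"

text \<open>Modified log-Sobolev inequality with constant r, tested on positive non-constant f
  (equivalent to f \<ge> 0 with the conventions log 0 = -\<infinity>, 0 log 0 = 0).\<close>
definition mlsi :: "('n::finite cube \<Rightarrow> real) \<Rightarrow> ('n cube \<Rightarrow> 'n cube \<Rightarrow> real) \<Rightarrow> real \<Rightarrow> bool" where
  "mlsi \<mu> L r \<longleftrightarrow> (\<forall>f. (\<forall>x. f x > 0) \<and> \<not> (\<forall>x y. f x = f y) \<longrightarrow>
      r * Ent \<mu> f \<le> dirichlet \<mu> L f (\<lambda>x. ln (f x)))"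

definition is_rho :: "('n::finite cube \<Rightarrow> real) \<Rightarrow> ('n cube \<Rightarrow> 'n cube \<Rightarrow> real) \<Rightarrow> real \<Rightarrow> bool" where
  "is_rho \<mu> L r \<longleftrightarrow> mlsi \<mu> L r \<and> (\<forall>r'. mlsi \<mu> L r' \<longrightarrow> r' \<le> r)"

definition rho :: "('n::finite cube \<Rightarrow> real) \<Rightarrow> ('n cube \<Rightarrow> 'n cube \<Rightarrow> real) \<Rightarrow> real" where
  "rho \<mu> L = (THE r. is_rho \<mu> L r)"

definition R_stable :: "('n::finite cube \<Rightarrow> real) \<Rightarrow> ('n cube \<Rightarrow> 'n cube \<Rightarrow> real) \<Rightarrow> real \<Rightarrow> bool" where
  "R_stable \<mu> L R \<longleftrightarrow> (\<exists>r. is_rho \<mu> L r) \<and> rho \<mu> L > 0 \<and>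
     (\<forall>x i. \<mu> x > 0 \<longrightarrow> (\<Sum>y\<in>{y. y i \<noteq> x i}. L x y) \<le> R * rho \<mu> L)"

definition Gamma_plus :: "('n::finite cube \<Rightarrow> 'n cube \<Rightarrow> real) \<Rightarrow> ('n cube \<Rightarrow> real) \<Rightarrow> 'n cube \<Rightarrow> real" where
  "Gamma_plus L g x = (\<Sum>y\<in>UNIV. (max (g x - g y) 0)^2 * L x y)"

definition dH :: "'n::finite cube \<Rightarrow> 'n cube \<Rightarrow> real" where
  "dH x y = real (card {i. x i \<noteq> y i})"

definition d_alpha :: "('n::finite \<Rightarrow> real) \<Rightarrow> 'n cube \<Rightarrow> 'n cube \<Rightarrow> real" where
  "d_alpha \<alpha> x y = (\<Sum>i\<in>UNIV. \<alpha> i * (if x i \<noteq> y i then 1 else 0))"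

definition d_alpha_set :: "('n::finite \<Rightarrow> real) \<Rightarrow> 'n cube \<Rightarrow> 'n cube set \<Rightarrow> real" where
  "d_alpha_set \<alpha> x A = Min ((\<lambda>y. d_alpha \<alpha> x y) ` A)"

definition dT :: "'n::finite cube \<Rightarrow> 'n cube set \<Rightarrow> real" where
  "dT x A = (SUP \<alpha>\<in>{\<alpha>. (\<forall>i. \<alpha> i \<ge> 0) \<and> sqrt (\<Sum>i\<in>UNIV. (\<alpha> i)^2) \<le> 1}. d_alpha_set \<alpha> x A)"

end

theory Submission
  imports Defs
begin

text \<open>
  For fixed x, let K_x(A) (diff_hull x A below) be the convex hull of the indicator vectors of the sets
  {i. x i \<noteq> z i}, z \<in> A.  Since d_alpha is linear in these vectors, d_T(x,A) is the
  Euclidean distance from 0 to K_x(A), and the unit vector pointing to the closest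
  point v is a weight attaining the supremum.

  Reflecting the coordinates in which x and y differ maps K_y(A) onto K_x(A); as all
  coordinates lie in [0,1], this raises the squared norm of v by at most d_H(x,y),
  which is the second claim.

  For the first claim take the optimal weight alpha at x.  Then
  d_T(x,A) - d_T(y,A) \<le> d_alpha(x,y), and for a flip or a swap y of x Cauchy-Schwarz
  gives d_alpha(x,y)^2 \<le> 2 \<Sum>{alpha_i^2 : x_i \<noteq> y_i}.  Summing against L(x,y),
  the weight alpha_i^2 meets the rate of changing coordinate i, which R-stability
  bounds by R \<rho>(L), and \<Sum> alpha_i^2 \<le> 1.
\<close>

definition diff_vec :: "'n::finite cube \<Rightarrow> 'n cube \<Rightarrow> real^'n" where
  "diff_vec x z = (\<chi> i. if x i \<noteq> z i then 1 else 0)"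

definition diff_hull :: "'n::finite cube \<Rightarrow> 'n cube set \<Rightarrow> (real^'n) set" where
  "diff_hull x A = convex hull (diff_vec x ` A)"

definition unit_weight :: "('n::finite \<Rightarrow> real) \<Rightarrow> bool" where
  "unit_weight \<alpha> \<longleftrightarrow> (\<forall>i. \<alpha> i \<ge> 0) \<and> sqrt (\<Sum>i\<in>UNIV. (\<alpha> i)^2) \<le> 1"

lemma power2_norm_vec: "(norm (w::real^'n::finite))^2 = (\<Sum>i\<in>UNIV. (w$i)^2)"
  unfolding power2_norm_eq_inner inner_vec_def by (simp add: power2_eq_square)

lemma unit_weight_zero: "unit_weight (\<lambda>i. 0)"
  by (simp add: unit_weight_def)

lemma unit_weight_sum_le_1: "unit_weight \<alpha> \<Longrightarrow> (\<Sum>i\<in>UNIV. (\<alpha> i)^2) \<le> 1"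
  unfolding unit_weight_def by (metis real_sqrt_le_1_iff)

lemma d_alpha_eq_sum: "d_alpha \<alpha> x y = sum \<alpha> {i. x i \<noteq> y i}"
  unfolding d_alpha_def by (simp add: sum.If_cases if_distrib)

lemma d_alpha_eq_inner: "d_alpha \<alpha> x z = inner (\<chi> i. \<alpha> i) (diff_vec x z)"
  unfolding d_alpha_def diff_vec_def inner_vec_def by (intro sum.cong) auto

lemma d_alpha_triangle:
  assumes "\<And>i. \<alpha> i \<ge> 0"
  shows "d_alpha \<alpha> x z \<le> d_alpha \<alpha> x y + d_alpha \<alpha> y z"
  unfolding d_alpha_def sum.distrib[symmetric] using assms by (intro sum_mono) auto

lemma d_alpha_set_le_add:
  assumes "A \<noteq> {}" and "\<And>i. \<alpha> i \<ge> 0"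
  shows "d_alpha_set \<alpha> x A \<le> d_alpha \<alpha> x y + d_alpha_set \<alpha> y A"
proof -
  have "d_alpha_set \<alpha> y A \<in> d_alpha \<alpha> y ` A"
    unfolding d_alpha_set_def using assms(1) by (intro Min_in) auto
  then obtain z where z: "z \<in> A" "d_alpha_set \<alpha> y A = d_alpha \<alpha> y z" by blast
  have "d_alpha_set \<alpha> x A \<le> d_alpha \<alpha> x z"
    unfolding d_alpha_set_def using z(1) by (auto intro!: Min_le)
  also have "\<dots> \<le> d_alpha \<alpha> x y + d_alpha \<alpha> y z"
    using assms(2) by (rule d_alpha_triangle)
  finally show ?thesis using z(2) by simp
qed

lemma d_alpha_power2_le:
  assumes "card {i. x i \<noteq> y i} \<le> 2"
  shows "(d_alpha \<alpha> x y)^2 \<le> 2 * d_alpha (\<lambda>i. (\<alpha> i)^2) x y"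
proof -
  have "(d_alpha \<alpha> x y)^2 \<le> d_alpha (\<lambda>i. (\<alpha> i)^2) x y * card {i. x i \<noteq> y i}"
    unfolding d_alpha_eq_sum by (rule sum_squared_le_sum_of_squares)
  also have "\<dots> \<le> 2 * d_alpha (\<lambda>i. (\<alpha> i)^2) x y"
    using assms by (simp add: d_alpha_eq_sum mult.commute mult_right_mono sum_nonneg)
  finally show ?thesis .
qed

lemma card_diff_le_2_if_flip_swap:
  assumes "flip_swap L" and "L x y > 0"
  shows "card {i. x i \<noteq> y i} \<le> 2"
proof (cases "x = y")
  case False
  with assms consider i where "y = x(i := \<not> x i)"
    | i j where "y = x(i := x j, j := x i)"
    unfolding flip_swap_def by blast
  then show ?thesis
  proof cases
    case (1 i)
    then have "{i. x i \<noteq> y i} = {i}" by auto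
    then show ?thesis by simp
  next
    case (2 i j)
    then have "card {i. x i \<noteq> y i} \<le> card {i, j}" by (intro card_mono) auto
    also have "\<dots> \<le> 2" by (simp add: card_insert_if)
    finally show ?thesis .
  qed
qed simp

subsection \<open>The convex hull representation of d_T\<close>

lemma diff_vec_in_diff_hull: "z \<in> A \<Longrightarrow> diff_vec x z \<in> diff_hull x A"
  unfolding diff_hull_def by (simp add: hull_inc)

lemma diff_hull_nonneg:
  assumes "w \<in> diff_hull x A"
  shows "w $ i \<ge> 0"
proof -
  have "diff_hull x A \<subseteq> {w. w $ i \<ge> 0}"
    unfolding diff_hull_def
    by (intro hull_minimal) (auto simp: diff_vec_def convex_def)
  then show ?thesis using assms by auto
qed

lemma d_alpha_set_le_norm:
  fixes \<alpha> :: "'n::finite \<Rightarrow> real"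
  assumes "A \<noteq> {}" and "unit_weight \<alpha>" and "w \<in> diff_hull x A"
  shows "d_alpha_set \<alpha> x A \<le> norm w"
proof -
  define a :: "real^'n" where "a = (\<chi> i. \<alpha> i)"
  have "diff_vec x ` A \<subseteq> {w. inner a w \<ge> d_alpha_set \<alpha> x A}"
    unfolding d_alpha_set_def by (auto simp: a_def d_alpha_eq_inner[symmetric] intro!: Min_le)
  then have "diff_hull x A \<subseteq> {w. inner a w \<ge> d_alpha_set \<alpha> x A}"
    unfolding diff_hull_def by (intro hull_minimal convex_halfspace_ge)
  then have "d_alpha_set \<alpha> x A \<le> inner a w" using assms(3) by auto
  also have "\<dots> \<le> norm a * norm w" by (rule norm_cauchy_schwarz)
  also have "\<dots> \<le> norm w"
  proof -
    have "(norm a)^2 \<le> 1"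
      using unit_weight_sum_le_1[OF assms(2)] by (simp add: power2_norm_vec a_def)
    then have "norm a \<le> 1" by (simp add: power_le_one_iff)
    then show ?thesis by (simp add: mult_left_le_one_le)
  qed
  finally show ?thesis .
qed

lemma dT_unit_weight: "dT x A = (SUP \<alpha>\<in>Collect unit_weight. d_alpha_set \<alpha> x A)"
  unfolding dT_def unit_weight_def by simp

lemma d_alpha_set_le_dT:
  assumes "A \<noteq> {}" and "unit_weight \<alpha>"
  shows "d_alpha_set \<alpha> x A \<le> dT x A"
proof -
  obtain z where "z \<in> A" using assms(1) by auto
  then have "bdd_above ((\<lambda>\<alpha>. d_alpha_set \<alpha> x A) ` Collect unit_weight)"
    using d_alpha_set_le_norm[OF assms(1) _ diff_vec_in_diff_hull] by (auto intro!: bdd_aboveI)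
  then show ?thesis
    unfolding dT_unit_weight using assms(2) by (auto intro: cSUP_upper)
qed

lemma dT_le_norm:
  assumes "A \<noteq> {}" and "w \<in> diff_hull x A"
  shows "dT x A \<le> norm w"
  unfolding dT_unit_weight using assms unit_weight_zero
  by (intro cSUP_least) (auto intro: d_alpha_set_le_norm)

lemma dT_nonneg:
  assumes "A \<noteq> {}"
  shows "dT x A \<ge> 0"
proof -
  have "d_alpha_set (\<lambda>i. 0) x A = 0"
    using assms unfolding d_alpha_set_def d_alpha_def by simp
  then show ?thesis using d_alpha_set_le_dT[OF assms unit_weight_zero, of x] by simp
qed

lemma min_norm_point_exists:
  fixes S :: "'a::euclidean_space set"
  assumes "convex S" and "closed S" and "S \<noteq> {}"
  obtains v where "v \<in> S" and "\<And>w. w \<in> S \<Longrightarrow> inner v v \<le> inner v w"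
proof -
  obtain v where v: "v \<in> S" "\<And>w. w \<in> S \<Longrightarrow> dist 0 v \<le> dist 0 w"
    using distance_attains_inf[OF assms(2,3)] by blast
  have "inner v v \<le> inner v w" if "w \<in> S" for w
    using any_closest_point_dot[OF assms(1,2) v(1) that, of 0] v(2)
    by (auto simp: inner_diff_right)
  with v(1) that show ?thesis by blast
qed

lemma min_norm_point_weight:
  assumes "A \<noteq> {}" and v: "v \<in> diff_hull x A" "v \<noteq> 0"
    and min: "\<And>w. w \<in> diff_hull x A \<Longrightarrow> inner v v \<le> inner v w"
  defines "\<alpha> \<equiv> \<lambda>i. v $ i / norm v"
  shows "unit_weight \<alpha>" and "d_alpha_set \<alpha> x A = norm v"
proof -
  have nv: "norm v > 0" using v(2) by simp
  have \<alpha>_vec: "(\<chi> i. \<alpha> i) = v /\<^sub>R norm v"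
    by (simp add: \<alpha>_def vec_eq_iff divide_inverse mult.commute)
  have "(\<Sum>i\<in>UNIV. (\<alpha> i)^2) = (norm (\<chi> i. \<alpha> i))^2"
    by (simp add: power2_norm_vec)
  also have "\<dots> = 1" using nv by (simp add: \<alpha>_vec)
  finally have "(\<Sum>i\<in>UNIV. (\<alpha> i)^2) = 1" .
  moreover have "\<alpha> i \<ge> 0" for i
    unfolding \<alpha>_def using diff_hull_nonneg[OF v(1)] by simp
  ultimately show uw: "unit_weight \<alpha>" unfolding unit_weight_def by simp
  have "norm v \<le> d_alpha \<alpha> x z" if "z \<in> A" for z
  proof -
    have "norm v = inner v v / norm v"
      using nv by (simp add: power2_norm_eq_inner[symmetric] power2_eq_square)
    also have "\<dots> \<le> inner v (diff_vec x z) / norm v"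
      using min[OF diff_vec_in_diff_hull[OF that]] nv by (simp add: divide_right_mono)
    also have "\<dots> = d_alpha \<alpha> x z" by (simp add: d_alpha_eq_inner \<alpha>_vec divide_inverse)
    finally show ?thesis .
  qed
  then have "norm v \<le> d_alpha_set \<alpha> x A"
    unfolding d_alpha_set_def using assms(1) by (auto intro!: Min.boundedI)
  with d_alpha_set_le_norm[OF assms(1) uw v(1)] show "d_alpha_set \<alpha> x A = norm v" by simp
qed

lemma dT_attained:
  assumes "A \<noteq> {}"
  obtains v \<alpha> where "v \<in> diff_hull x A" and "unit_weight \<alpha>"
    and "dT x A = norm v" and "d_alpha_set \<alpha> x A = dT x A"
proof -
  have "convex (diff_hull x A)" "closed (diff_hull x A)" "diff_hull x A \<noteq> {}"
    unfolding diff_hull_def using assms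
    by (auto intro!: compact_imp_closed finite_imp_compact_convex_hull)
  then obtain v where v: "v \<in> diff_hull x A"
    and min: "\<And>w. w \<in> diff_hull x A \<Longrightarrow> inner v v \<le> inner v w"
    using min_norm_point_exists by blast
  obtain \<alpha> where "unit_weight \<alpha>" and "d_alpha_set \<alpha> x A = norm v"
  proof (cases "v = 0")
    case True
    then show ?thesis
      using that[OF unit_weight_zero] assms unfolding d_alpha_set_def d_alpha_def by simp
  next
    case False
    then show ?thesis using that min_norm_point_weight[OF assms v False min] by blast
  qed
  moreover from this have "dT x A = norm v"
    using dT_le_norm[OF assms v] d_alpha_set_le_dT[OF assms] by (metis antisym)
  ultimately show ?thesis using that v by simp
qed

lemma reflect_diff_hull:
  fixes x y :: "'n::finite cube"
  defines "\<phi> \<equiv> \<lambda>w::real^'n. \<chi> i. if x i = y i then w $ i else 1 - w $ i"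
  shows "\<phi> ` diff_hull y A = diff_hull x A"
proof -
  define f :: "real^'n \<Rightarrow> real^'n" where "f w = (\<chi> i. if x i = y i then w $ i else - w $ i)" for w
  have "linear f"
    by (auto simp: linear_iff f_def vec_eq_iff)
  have \<phi>_eq: "\<phi> = (\<lambda>w. diff_vec x y + w) \<circ> f"
    by (auto simp: \<phi>_def f_def diff_vec_def vec_eq_iff)
  have "\<phi> ` (convex hull S) = convex hull (\<phi> ` S)" for S
    unfolding \<phi>_eq image_comp[symmetric] convex_hull_linear_image[OF \<open>linear f\<close>]
    by (simp only: convex_hull_translation)
  moreover have "\<phi> (diff_vec y z) = diff_vec x z" for z
    by (auto simp: \<phi>_def diff_vec_def vec_eq_iff)
  ultimately show ?thesis
    unfolding diff_hull_def by (simp add: image_image)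
qed

lemma dT_power2_diff_le_dH:
  fixes x y :: "'n::finite cube"
  assumes "A \<noteq> {}"
  shows "(dT x A)^2 - (dT y A)^2 \<le> dH x y"
proof -
  obtain v where v: "v \<in> diff_hull y A" and dT_y: "dT y A = norm v"
    using dT_attained[OF assms, of y] by metis
  define w :: "real^'n" where "w = (\<chi> i. if x i = y i then v $ i else 1 - v $ i)"
  have "w \<in> diff_hull x A"
    using v reflect_diff_hull[of x y A] unfolding w_def by blast
  then have "(dT x A)^2 \<le> (norm w)^2"
    using dT_le_norm[OF assms] dT_nonneg[OF assms] by (simp add: power_mono)
  then have "(dT x A)^2 - (dT y A)^2 \<le> (\<Sum>i\<in>UNIV. (w $ i)^2 - (v $ i)^2)"
    unfolding dT_y power2_norm_vec sum_subtractf by simp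
  also have "\<dots> \<le> (\<Sum>i\<in>UNIV. if x i \<noteq> y i then 1 else 0)"
    using diff_hull_nonneg[OF v]
    by (intro sum_mono) (auto simp: w_def power2_eq_square algebra_simps)
  also have "\<dots> = dH x y"
    unfolding dH_def by (simp add: sum.If_cases)
  finally show ?thesis .
qed

lemma dT_diff_le_d_alpha:
  assumes "A \<noteq> {}" and "unit_weight \<alpha>" and "d_alpha_set \<alpha> x A = dT x A"
  shows "dT x A - dT y A \<le> d_alpha \<alpha> x y"
  using d_alpha_set_le_add[OF assms(1), of \<alpha> x y] d_alpha_set_le_dT[OF assms(1,2), of y] assms(2,3)
  unfolding unit_weight_def by simp

lemma max_diff_power2_le:
  fixes m t s :: real
  assumes "0 \<le> t" and "0 \<le> m" and "m - t \<le> s"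
  shows "(max (m^2 - t^2) 0)^2 \<le> 4 * m^2 * s^2"
proof (cases "t \<le> m")
  case True
  have "m^2 - t^2 = (m - t) * (m + t)" by (simp add: power2_eq_square algebra_simps)
  also have "\<dots> \<le> s * (2 * m)" using True assms by (intro mult_mono) auto
  finally have "(m^2 - t^2)^2 \<le> (s * (2 * m))^2"
    using True assms by (intro power_mono) (auto simp: power_mono)
  moreover have "(s * (2 * m))^2 = 4 * m^2 * s^2" by (simp add: power_mult_distrib)
  moreover have "max (m^2 - t^2) 0 = m^2 - t^2" using True assms by (simp add: power_mono)
  ultimately show ?thesis by simp
next
  case False
  then have "max (m^2 - t^2) 0 = 0" using assms by (simp add: power_mono)
  then show ?thesis by simp
qed

lemma dT_power2_diff_pos_le:
  assumes "A \<noteq> {}" and "unit_weight \<alpha>" and "d_alpha_set \<alpha> x A = dT x A"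
    and "card {i. x i \<noteq> y i} \<le> 2"
  shows "(max ((dT x A)^2 - (dT y A)^2) 0)^2 \<le> 8 * (dT x A)^2 * d_alpha (\<lambda>i. (\<alpha> i)^2) x y"
proof -
  have "(max ((dT x A)^2 - (dT y A)^2) 0)^2 \<le> 4 * (dT x A)^2 * (d_alpha \<alpha> x y)^2"
    using dT_nonneg[OF assms(1)] dT_diff_le_d_alpha[OF assms(1-3)] by (intro max_diff_power2_le)
  also have "\<dots> \<le> 4 * (dT x A)^2 * (2 * d_alpha (\<lambda>i. (\<alpha> i)^2) x y)"
    using d_alpha_power2_le[OF assms(4)] by (intro mult_left_mono) auto
  finally show ?thesis by simp
qed

lemma sum_d_alpha_mult:
  "(\<Sum>y\<in>UNIV. d_alpha \<beta> x y * L x y) = (\<Sum>i\<in>UNIV. \<beta> i * (\<Sum>y\<in>{y. y i \<noteq> x i}. L x y))"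
proof -
  have "(\<Sum>y\<in>UNIV. d_alpha \<beta> x y * L x y)
      = (\<Sum>y\<in>UNIV. \<Sum>i\<in>UNIV. \<beta> i * (if y i \<noteq> x i then L x y else 0))"
    unfolding d_alpha_def sum_distrib_right by (intro sum.cong refl) auto
  also have "\<dots> = (\<Sum>i\<in>UNIV. \<Sum>y\<in>UNIV. \<beta> i * (if y i \<noteq> x i then L x y else 0))"
    by (rule sum.swap)
  also have "\<dots> = (\<Sum>i\<in>UNIV. \<beta> i * (\<Sum>y\<in>{y. y i \<noteq> x i}. L x y))"
    by (simp add: sum_distrib_left[symmetric] sum.If_cases)
  finally show ?thesis .
qed

lemma Gamma_plus_dT_power2_le:
  fixes L :: "'n::finite cube \<Rightarrow> 'n cube \<Rightarrow> real"
  assumes "generator L" and "flip_swap L" and "A \<noteq> {}"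
    and rate: "\<And>i. (\<Sum>y\<in>{y. y i \<noteq> x i}. L x y) \<le> c"
  shows "Gamma_plus L (\<lambda>z. (dT z A)^2) x \<le> 8 * c * (dT x A)^2"
proof -
  obtain \<alpha> where \<alpha>: "unit_weight \<alpha>" "d_alpha_set \<alpha> x A = dT x A"
    using dT_attained[OF assms(3), of x] by metis
  define m where "m = dT x A"
  have L_nonneg: "L x y \<ge> 0" if "x \<noteq> y" for y
    using assms(1) that unfolding generator_def by blast
  have "0 \<le> (\<Sum>y\<in>{y. y i \<noteq> x i}. L x y)" for i
    by (rule sum_nonneg) (auto intro: L_nonneg)
  with rate have "c \<ge> 0" by (meson order_trans)
  have term_le: "(max (m^2 - (dT y A)^2) 0)^2 * L x y \<le> 8 * m^2 * d_alpha (\<lambda>i. (\<alpha> i)^2) x y * L x y"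
    for y
  proof (cases "L x y > 0")
    case True
    then show ?thesis
      unfolding m_def
      using dT_power2_diff_pos_le[OF assms(3) \<alpha> card_diff_le_2_if_flip_swap[OF assms(2)]]
      by (intro mult_right_mono) auto
  next
    case False
    then have "L x y = 0 \<or> x = y" using L_nonneg[of y] by force
    then show ?thesis by (auto simp: d_alpha_def m_def)
  qed
  have "Gamma_plus L (\<lambda>z. (dT z A)^2) x \<le> (\<Sum>y\<in>UNIV. 8 * m^2 * d_alpha (\<lambda>i. (\<alpha> i)^2) x y * L x y)"
    unfolding Gamma_plus_def m_def[symmetric] by (intro sum_mono term_le)
  also have "\<dots> = 8 * m^2 * (\<Sum>i\<in>UNIV. (\<alpha> i)^2 * (\<Sum>y\<in>{y. y i \<noteq> x i}. L x y))"
    by (simp add: sum_distrib_left[symmetric] sum_d_alpha_mult mult.assoc)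
  also have "\<dots> \<le> 8 * m^2 * ((\<Sum>i\<in>UNIV. (\<alpha> i)^2) * c)"
    unfolding sum_distrib_right by (intro mult_left_mono sum_mono rate) auto
  also have "\<dots> \<le> 8 * m^2 * c"
    using unit_weight_sum_le_1[OF \<alpha>(1)] \<open>c \<ge> 0\<close>
    by (intro mult_left_mono mult_left_le_one_le sum_nonneg) auto
  finally show ?thesis unfolding m_def by (simp add: algebra_simps)
qed

theorem lemma6p2:
  fixes \<mu> :: "'n::finite cube \<Rightarrow> real"
    and L :: "'n cube \<Rightarrow> 'n cube \<Rightarrow> real"
    and R :: real
  assumes "prob_on \<mu>"
    and "generator L"
    and "reversible \<mu> L"
    and "flip_swap L"
    and "R \<ge> 0"
    and "R_stable \<mu> L R"
  shows "(\<forall>A x. A \<noteq> {} \<and> \<mu> x > 0 \<longrightarrow>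
            Gamma_plus L (\<lambda>z. (dT z A)^2) x \<le> 8 * R * rho \<mu> L * (dT x A)^2)
       \<and> (\<forall>(x::'n cube) y A. A \<noteq> {} \<longrightarrow> (dT x A)^2 - (dT y A)^2 \<le> dH x y)"
proof (intro conjI allI impI)
  fix A :: "'n cube set" and x :: "'n cube"
  assume "A \<noteq> {} \<and> \<mu> x > 0"
  then have "\<And>i. (\<Sum>y\<in>{y. y i \<noteq> x i}. L x y) \<le> R * rho \<mu> L"
    using assms(6) unfolding R_stable_def by blast
  with assms(2,4) \<open>A \<noteq> {} \<and> \<mu> x > 0\<close>
  show "Gamma_plus L (\<lambda>z. (dT z A)^2) x \<le> 8 * R * rho \<mu> L * (dT x A)^2"
    using Gamma_plus_dT_power2_le[of L A x "R * rho \<mu> L"] by (simp add: mult.assoc)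
qed (rule dT_power2_diff_le_dH)

end
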